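(* Let $A,B:(0,\infty)\to(0,\infty)$ be the functions $A=\tfrac r3\sqrt{1-r^{-3}}$, $B=\tfrac r{\sqrt3}$, where $r=r(t)\in(1,\infty)$ is determined by $\dot A=\tfrac12(1-A^2/B^2)$, $\dot B=A/B$ with $r\to1$ as $t\to0$. Consider the ODE system $$\dot f_+=\frac{f_+}{A}\Bigl(1-\frac{A^2}{B^2}-f_+\Bigr)+f_-^2\frac{A}{B^2},\qquad \dot f_-=\frac{2f_-}{A}(f_+-1).$$ If a solution $(f_+,f_-)$ lies in $\mathcal{R}_\infty=\{f_+>1,\ f_->1\}$ at some time $t_0>0$, then it cannot be uniformly bounded for all $t\ge t_0$.
   Context: $A$ and $B$ are the metric coefficients of the Bryant–Salamon $G_2$-metric on $\mathbf{S}(S^3)$, and the system is the $\mathrm{SU}(2)^3$-invariant $G_2$-instanton equation for $\mathrm{SU}(2)$-connections $f_+\sum_iE_i\otimes e_i^++f_-\sum_iE_i\otimes e_i^-$. "Cannot be uniformly bounded for all $t\ge t_0$" includes the possibility of blow-up in finite time. *)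

theory Defs
  imports Complex_Main
begin

definition BS_A :: "real \<Rightarrow> real" where
  "BS_A r = r / 3 * sqrt (1 - 1 / r ^ 3)"

definition BS_B :: "real \<Rightarrow> real" where
  "BS_B r = r / sqrt 3"

end

theory Submission
  imports Defs "HOL-Analysis.Analysis"
begin

(* Forward invariance of {f+ > 1, f- > 1}: f- is nondecreasing while f+ > 1, and on the
   boundary piece f+ = 1, f- > 1 the field points inwards, since there
   f+' = (f-^2 - 1) A / B^2 > 0.
   Inside this region, with c = f-(t0) and f+ <= M, the function
   f+ + (M + 1) ln f- - (c^2 - 1) ln r is nondecreasing, because A / B^2 = (ln r)'.
   So a bounded solution keeps ln r bounded, whereas r' = sqrt (1 - r^-3) makes r grow at
   least linearly. *)

lemma first_hitting_time:
  fixes g :: "real \<Rightarrow> real"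
  assumes cont: "continuous_on {t0..} g" and start: "c < g t0" and hit: "t0 \<le> t1" "g t1 \<le> c"
  obtains \<tau> where "t0 < \<tau>" "g \<tau> = c" "\<And>s. t0 \<le> s \<Longrightarrow> s < \<tau> \<Longrightarrow> c < g s"
proof -
  define S where "S = {t0..} \<inter> g -` {..c}"
  have "t1 \<in> S" using hit by (simp add: S_def)
  moreover have "closed S"
    unfolding S_def by (intro continuous_closed_preimage cont) auto
  moreover have "bdd_below S" by (auto simp: S_def bdd_below_def)
  ultimately have "Inf S \<in> S" using closed_contains_Inf by blast
  then have "t0 \<le> Inf S" "g (Inf S) \<le> c" by (auto simp: S_def)
  have before: "c < g s" if "t0 \<le> s" "s < Inf S" for s
    using that cInf_lower[OF _ \<open>bdd_below S\<close>, of s] by (force simp: S_def)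
  obtain x where x: "t0 \<le> x" "x \<le> Inf S" "g x = c"
    using IVT2'[OF \<open>g (Inf S) \<le> c\<close> less_imp_le[OF start] \<open>t0 \<le> Inf S\<close>]
      continuous_on_subset[OF cont] by fastforce
  then have "x = Inf S" using before by force
  moreover have "x \<noteq> t0" using x start by auto
  ultimately show ?thesis
    using that[of "Inf S"] x before by force
qed

lemma has_real_derivative_nonpos_if_left_above:
  fixes f :: "real \<Rightarrow> real"
  assumes "(f has_real_derivative D) (at \<tau> within S)" "a < \<tau>"
    and "\<And>s. a \<le> s \<Longrightarrow> s < \<tau> \<Longrightarrow> s \<in> S \<and> f \<tau> \<le> f s"
  shows "D \<le> 0"
proof (rule ccontr)
  assume "\<not> D \<le> 0"
  then obtain d where "d > 0" and d: "\<And>h. 0 < h \<Longrightarrow> \<tau> - h \<in> S \<Longrightarrow> h < d \<Longrightarrow> f (\<tau> - h) < f \<tau>"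
    using has_real_derivative_pos_inc_left[OF assms(1)] by force
  define h where "h = min (d / 2) (\<tau> - a)"
  have "0 < h" "h < d" "a \<le> \<tau> - h" "\<tau> - h < \<tau>"
    using \<open>d > 0\<close> \<open>a < \<tau>\<close> by (auto simp: h_def)
  then show False using d assms(3)[of "\<tau> - h"] by force
qed

lemma nondecreasing_if_deriv_nonneg_within_atLeast:
  fixes f f' :: "real \<Rightarrow> real"
  assumes deriv: "\<And>t. t0 \<le> t \<Longrightarrow> (f has_real_derivative f' t) (at t within {t0..})"
    and nonneg: "\<And>t. t0 < t \<Longrightarrow> t < b \<Longrightarrow> 0 \<le> f' t" and "t0 \<le> b"
  shows "f t0 \<le> f b"
proof (rule DERIV_nonneg_imp_increasing_open[OF \<open>t0 \<le> b\<close>])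
  fix t assume "t0 < t" "t < b"
  moreover have "at t within {t0..} = at t"
    using \<open>t0 < t\<close> by (intro at_within_interior) auto
  ultimately show "\<exists>y. (f has_real_derivative y) (at t) \<and> 0 \<le> y"
    using deriv[of t] nonneg by force
next
  show "continuous_on {t0..b} f"
    using deriv by (intro DERIV_continuous_on[of _ _ f'])
      (auto intro: has_field_derivative_subset[OF deriv])
qed

lemma linear_lower_bound_if_deriv_mono:
  fixes r g :: "real \<Rightarrow> real"
  assumes deriv: "\<And>t. t0 \<le> t \<Longrightarrow> (r has_real_derivative g (r t)) (at t)"
    and range: "\<And>t. t0 \<le> t \<Longrightarrow> a < r t"
    and nonneg: "\<And>x. a < x \<Longrightarrow> 0 \<le> g x" and mono: "mono_on {a<..} g"
    and "t0 \<le> t"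
  shows "r t0 + g (r t0) * (t - t0) \<le> r t"
proof -
  have r_mono: "r t0 \<le> r s" if "t0 \<le> s" for s
    using that deriv range nonneg by (intro deriv_nonneg_imp_mono[of t0 s r "\<lambda>s. g (r s)"]) auto
  have "r t0 - g (r t0) * t0 \<le> r t - g (r t0) * t"
  proof (rule deriv_nonneg_imp_mono[OF _ _ \<open>t0 \<le> t\<close>])
    fix s assume "s \<in> {t0..t}"
    then show "((\<lambda>s. r s - g (r t0) * s) has_real_derivative g (r s) - g (r t0)) (at s)"
      by (auto intro!: derivative_eq_intros deriv)
    show "0 \<le> g (r s) - g (r t0)"
      using \<open>s \<in> {t0..t}\<close> range r_mono by (auto intro: mono_onD[OF mono])
  qed
  then show ?thesis by (simp add: algebra_simps)
qed

lemma ln_unbounded_if_linear_lower_bound: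
  fixes r :: "real \<Rightarrow> real"
  assumes "0 < \<delta>" "0 < r t0" and grow: "\<And>t. t0 \<le> t \<Longrightarrow> r t0 + \<delta> * (t - t0) \<le> r t"
  shows "\<not> (\<exists>C. \<forall>t\<ge>t0. ln (r t) \<le> C)"
proof
  assume "\<exists>C. \<forall>t\<ge>t0. ln (r t) \<le> C"
  then obtain C where C: "\<And>t. t0 \<le> t \<Longrightarrow> ln (r t) \<le> C" by blast
  define t where "t = t0 + exp C / \<delta>"
  have "t0 \<le> t" using \<open>0 < \<delta>\<close> by (simp add: t_def)
  have "exp C < r t"
    using grow[OF \<open>t0 \<le> t\<close>] \<open>0 < \<delta>\<close> \<open>0 < r t0\<close> by (simp add: t_def)
  then have "C < ln (r t)" using ln_less_cancel_iff[of "exp C" "r t"] exp_gt_zero[of C] by simp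
  then show False using C[OF \<open>t0 \<le> t\<close>] by simp
qed

definition instanton_rhs_plus :: "real \<Rightarrow> real \<Rightarrow> real \<Rightarrow> real \<Rightarrow> real" where
  "instanton_rhs_plus a b p m = p / a * (1 - a\<^sup>2 / b\<^sup>2 - p) + m\<^sup>2 * a / b\<^sup>2"

definition instanton_rhs_minus :: "real \<Rightarrow> real \<Rightarrow> real \<Rightarrow> real" where
  "instanton_rhs_minus a p m = 2 * m / a * (p - 1)"

lemma instanton_rhs_minus_nonneg:
  "0 < a \<Longrightarrow> 1 \<le> p \<Longrightarrow> 0 \<le> m \<Longrightarrow> 0 \<le> instanton_rhs_minus a p m"
  by (simp add: instanton_rhs_minus_def)

lemma instanton_rhs_plus_pos_at_one:
  assumes "0 < a" "0 < b" "1 < m"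
  shows "0 < instanton_rhs_plus a b 1 m"
proof -
  have "instanton_rhs_plus a b 1 m = (m\<^sup>2 - 1) * a / b\<^sup>2"
    using assms by (simp add: instanton_rhs_plus_def field_simps power2_eq_square)
  moreover have "1 < m\<^sup>2" using assms by (simp add: one_less_power)
  ultimately show ?thesis using assms by simp
qed

lemma instanton_rhs_lyapunov:
  assumes "0 < a" "a \<le> b" "1 < p" "p \<le> M" "0 < c" "c \<le> m"
  shows "(c\<^sup>2 - 1) * (a / b\<^sup>2)
    \<le> instanton_rhs_plus a b p m + (M + 1) * (instanton_rhs_minus a p m / m)"
proof -
  define q where "q = a\<^sup>2 / b\<^sup>2"
  have "q \<le> 1" "0 \<le> q"
    using assms by (auto simp: q_def divide_le_eq_1 power_mono)
  have "c\<^sup>2 \<le> m\<^sup>2" using assms by (simp add: power_mono)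
  have "b \<noteq> 0" using assms by auto
  have minus: "instanton_rhs_minus a p m / m = 2 * (p - 1) / a"
    using assms by (simp add: instanton_rhs_minus_def)
  have ratio: "a / b\<^sup>2 = q / a"
    using assms by (simp add: q_def power2_eq_square)
  have plus: "instanton_rhs_plus a b p m = (p * (1 - q - p) + m\<^sup>2 * q) / a"
    using assms unfolding instanton_rhs_plus_def q_def[symmetric] times_divide_eq_right[symmetric] ratio
    by (simp add: field_simps)
  have "a * (instanton_rhs_plus a b p m + (M + 1) * (instanton_rhs_minus a p m / m)
      - (c\<^sup>2 - 1) * (a / b\<^sup>2))
    = (p - 1) * (2 * (M + 1) - p - q) + (m\<^sup>2 - c\<^sup>2) * q"
    unfolding minus ratio plus using assms by (simp add: field_simps power2_eq_square)
  also have "\<dots> \<ge> 0"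
    using assms \<open>q \<le> 1\<close> \<open>0 \<le> q\<close> \<open>c\<^sup>2 \<le> m\<^sup>2\<close> by (intro add_nonneg_nonneg mult_nonneg_nonneg) auto
  finally show ?thesis using \<open>0 < a\<close> by (simp add: zero_le_mult_iff)
qed

locale instanton_solution =
  fixes A B fp fm :: "real \<Rightarrow> real" and t0 :: real
  assumes A_pos: "\<And>t. t0 \<le> t \<Longrightarrow> 0 < A t"
    and B_pos: "\<And>t. t0 \<le> t \<Longrightarrow> 0 < B t"
    and fp_deriv: "\<And>t. t0 \<le> t \<Longrightarrow>
      (fp has_real_derivative instanton_rhs_plus (A t) (B t) (fp t) (fm t)) (at t within {t0..})"
    and fm_deriv: "\<And>t. t0 \<le> t \<Longrightarrow>
      (fm has_real_derivative instanton_rhs_minus (A t) (fp t) (fm t)) (at t within {t0..})"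
begin

lemma continuous_on_fp: "continuous_on {t0..} fp"
  unfolding continuous_on_eq_continuous_within using fp_deriv DERIV_continuous by blast

lemma continuous_on_fm: "continuous_on {t0..} fm"
  unfolding continuous_on_eq_continuous_within using fm_deriv DERIV_continuous by blast

lemma fm_mono_while_fp_gt_1:
  assumes "t0 \<le> \<tau>" and R: "\<And>t. t0 \<le> t \<Longrightarrow> t < \<tau> \<Longrightarrow> 1 < fp t \<and> 0 < fm t"
  shows "fm t0 \<le> fm \<tau>"
proof (rule nondecreasing_if_deriv_nonneg_within_atLeast[OF fm_deriv _ \<open>t0 \<le> \<tau>\<close>])
  fix t assume "t0 < t" "t < \<tau>"
  then show "0 \<le> instanton_rhs_minus (A t) (fp t) (fm t)"
    using R[of t] A_pos[of t] by (simp add: instanton_rhs_minus_nonneg)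
qed

lemma R_infinity_forward_invariant:
  assumes init: "1 < fp t0" "1 < fm t0" and "t0 \<le> t"
  shows "1 < fp t \<and> 1 < fm t"
proof (rule ccontr)
  let ?g = "\<lambda>t. min (fp t) (fm t)"
  assume "\<not> ?thesis"
  then have "?g t \<le> 1" by auto
  then obtain \<tau> where "t0 < \<tau>" "?g \<tau> = 1" and before: "\<And>s. t0 \<le> s \<Longrightarrow> s < \<tau> \<Longrightarrow> 1 < ?g s"
    using first_hitting_time[of t0 ?g] continuous_on_min[OF continuous_on_fp continuous_on_fm]
      init \<open>t0 \<le> t\<close> by auto
  have "fm t0 \<le> fm \<tau>"
    using before \<open>t0 < \<tau>\<close> by (intro fm_mono_while_fp_gt_1) force+
  with init \<open>?g \<tau> = 1\<close> have "fp \<tau> = 1" "1 < fm \<tau>" by auto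
  then have "0 < instanton_rhs_plus (A \<tau>) (B \<tau>) (fp \<tau>) (fm \<tau>)"
    using \<open>t0 < \<tau>\<close> by (simp add: instanton_rhs_plus_pos_at_one A_pos B_pos)
  moreover have "instanton_rhs_plus (A \<tau>) (B \<tau>) (fp \<tau>) (fm \<tau>) \<le> 0"
    using \<open>t0 < \<tau>\<close> before \<open>fp \<tau> = 1\<close>
    by (intro has_real_derivative_nonpos_if_left_above[OF fp_deriv, of \<tau> t0]) force+
  ultimately show False by simp
qed

lemma potential_bdd_above_if_bounded:
  assumes init: "1 < fp t0" "1 < fm t0"
    and A_le_B: "\<And>t. t0 \<le> t \<Longrightarrow> A t \<le> B t"
    and L_deriv: "\<And>t. t0 \<le> t \<Longrightarrow> (L has_real_derivative A t / (B t)\<^sup>2) (at t within {t0..})"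
    and bounded: "\<And>t. t0 \<le> t \<Longrightarrow> fp t \<le> M \<and> fm t \<le> M"
  shows "\<exists>C. \<forall>t\<ge>t0. L t \<le> C"
proof -
  define c where "c = fm t0"
  define \<Phi> where "\<Phi> t = fp t + (M + 1) * ln (fm t) - (c\<^sup>2 - 1) * L t" for t
  have R_inf: "1 < fp t" "1 < fm t" if "t0 \<le> t" for t
    using R_infinity_forward_invariant[OF init that] by auto
  have \<Phi>_mono: "\<Phi> t0 \<le> \<Phi> t" if "t0 \<le> t" for t
  proof (rule nondecreasing_if_deriv_nonneg_within_atLeast[OF _ _ that])
    fix s assume "t0 \<le> s"
    show "(\<Phi> has_real_derivative instanton_rhs_plus (A s) (B s) (fp s) (fm s)
        + (M + 1) * (instanton_rhs_minus (A s) (fp s) (fm s) / fm s)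
        - (c\<^sup>2 - 1) * (A s / (B s)\<^sup>2)) (at s within {t0..})"
      unfolding \<Phi>_def using R_inf[OF \<open>t0 \<le> s\<close>]
      by (auto intro!: derivative_eq_intros fp_deriv fm_deriv L_deriv \<open>t0 \<le> s\<close>
          simp: divide_inverse mult.commute)
  next
    fix s assume "t0 < s" "s < t"
    then have "fm t0 \<le> fm s"
      using R_inf by (intro fm_mono_while_fp_gt_1) force+
    then show "0 \<le> instanton_rhs_plus (A s) (B s) (fp s) (fm s)
        + (M + 1) * (instanton_rhs_minus (A s) (fp s) (fm s) / fm s)
        - (c\<^sup>2 - 1) * (A s / (B s)\<^sup>2)"
      using instanton_rhs_lyapunov[of "A s" "B s" "fp s" M c "fm s"] \<open>t0 < s\<close>
        A_pos A_le_B R_inf bounded init by (simp add: c_def)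
  qed
  have "(c\<^sup>2 - 1) * L t \<le> M + (M + 1) * ln M - \<Phi> t0" if "t0 \<le> t" for t
  proof -
    have "ln (fm t) \<le> ln M" "0 \<le> M + 1"
      using bounded[OF that] R_inf[OF that] by auto
    then show ?thesis
      using \<Phi>_mono[OF that] bounded[OF that] mult_left_mono unfolding \<Phi>_def by fastforce
  qed
  moreover have "0 < c\<^sup>2 - 1" using init by (simp add: c_def one_less_power)
  ultimately have "\<forall>t\<ge>t0. L t \<le> (M + (M + 1) * ln M - \<Phi> t0) / (c\<^sup>2 - 1)"
    by (simp add: pos_le_divide_eq mult.commute)
  then show ?thesis ..
qed

end

(* Since r = sqrt 3 * B, the equation for B says r' = sqrt 3 * A / B = BS_speed r. *)
definition BS_speed :: "real \<Rightarrow> real" where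
  "BS_speed x = sqrt (1 - 1 / x ^ 3)"

lemma BS_speed_pos: "1 < x \<Longrightarrow> 0 < BS_speed x"
  by (simp add: BS_speed_def)

lemma BS_speed_mono: "mono_on {1<..} BS_speed"
proof (rule mono_onI)
  fix x y :: real assume "x \<in> {1<..}" "y \<in> {1<..}" "x \<le> y"
  then have "1 / y ^ 3 \<le> 1 / x ^ 3" by (simp add: frac_le power_mono)
  then show "BS_speed x \<le> BS_speed y" by (simp add: BS_speed_def)
qed

lemma BS_A_pos: "1 < x \<Longrightarrow> 0 < BS_A x"
  by (simp add: BS_A_def)

lemma BS_B_pos: "1 < x \<Longrightarrow> 0 < BS_B x"
  by (simp add: BS_B_def)

lemma BS_A_le_BS_B:
  assumes "1 < x" shows "BS_A x \<le> BS_B x"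
proof -
  have "sqrt 3 \<le> (3::real)"
    using real_sqrt_le_mono[of 3 9] by simp
  have "BS_A x \<le> x / 3"
    using assms by (simp add: BS_A_def mult_left_le)
  also have "\<dots> \<le> x / sqrt 3"
    using assms \<open>sqrt 3 \<le> 3\<close> by (intro divide_left_mono) auto
  finally show ?thesis by (simp add: BS_B_def)
qed

lemma BS_speed_eq: "0 < x \<Longrightarrow> BS_speed x = sqrt 3 * (BS_A x / BS_B x)"
  by (simp add: BS_speed_def BS_A_def BS_B_def field_simps)

lemma BS_A_div_BS_B_sq: "0 < x \<Longrightarrow> BS_A x / (BS_B x)\<^sup>2 = BS_speed x / x"
  by (simp add: BS_speed_def BS_A_def BS_B_def power2_eq_square field_simps)

lemma BS_radius_deriv:
  assumes "((\<lambda>s. BS_B (r s)) has_real_derivative BS_A (r t) / BS_B (r t)) (at t)" "0 < r t"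
  shows "(r has_real_derivative BS_speed (r t)) (at t)"
  using DERIV_cmult[OF assms(1), of "sqrt 3"] assms(2) by (simp add: BS_speed_eq BS_B_def)

lemma BS_ln_radius_deriv:
  assumes "(r has_real_derivative BS_speed (r t)) (at t)" "0 < r t"
  shows "((\<lambda>t. ln (r t)) has_real_derivative BS_A (r t) / (BS_B (r t))\<^sup>2) (at t within S)"
proof -
  have "((\<lambda>t. ln (r t)) has_real_derivative inverse (r t) * BS_speed (r t)) (at t)"
    using assms by (intro DERIV_chain2[OF DERIV_ln])
  moreover have "inverse (r t) * BS_speed (r t) = BS_A (r t) / (BS_B (r t))\<^sup>2"
    using BS_A_div_BS_B_sq[OF \<open>0 < r t\<close>] by (simp only: divide_inverse_commute)
  ultimately show ?thesis by (simp add: has_field_derivative_at_within)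
qed

lemma BS_ln_radius_unbounded:
  assumes r: "\<And>t. t0 \<le> t \<Longrightarrow> 1 < r t"
    and r_deriv: "\<And>t. t0 \<le> t \<Longrightarrow> (r has_real_derivative BS_speed (r t)) (at t)"
  shows "\<not> (\<exists>C. \<forall>t\<ge>t0. ln (r t) \<le> C)"
proof (rule ln_unbounded_if_linear_lower_bound)
  show "0 < BS_speed (r t0)" "0 < r t0"
    using r[OF order_refl] BS_speed_pos by auto
  show "r t0 + BS_speed (r t0) * (t - t0) \<le> r t" if "t0 \<le> t" for t
  proof (rule linear_lower_bound_if_deriv_mono[OF r_deriv r _ BS_speed_mono that])
    show "0 \<le> BS_speed x" if "1 < x" for x
      using BS_speed_pos[OF that] by simp
  qed
qed

lemma BS_instanton_solution:
  assumes r: "\<And>t. t0 \<le> t \<Longrightarrow> 1 < r t"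
    and fp_ode: "\<forall>t\<ge>t0. (fp has_real_derivative
          fp t / BS_A (r t) * (1 - (BS_A (r t))\<^sup>2 / (BS_B (r t))\<^sup>2 - fp t)
          + (fm t)\<^sup>2 * BS_A (r t) / (BS_B (r t))\<^sup>2) (at t within {t0..})"
    and fm_ode: "\<forall>t\<ge>t0. (fm has_real_derivative
          2 * fm t / BS_A (r t) * (fp t - 1)) (at t within {t0..})"
  shows "instanton_solution (\<lambda>t. BS_A (r t)) (\<lambda>t. BS_B (r t)) fp fm t0"
proof
  fix t assume "t0 \<le> t"
  show "0 < BS_A (r t)" "0 < BS_B (r t)"
    using r[OF \<open>t0 \<le> t\<close>] by (simp_all add: BS_A_pos BS_B_pos)
  show "(fp has_real_derivative instanton_rhs_plus (BS_A (r t)) (BS_B (r t)) (fp t) (fm t))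
      (at t within {t0..})"
    unfolding instanton_rhs_plus_def using fp_ode \<open>t0 \<le> t\<close> by blast
  show "(fm has_real_derivative instanton_rhs_minus (BS_A (r t)) (fp t) (fm t)) (at t within {t0..})"
    unfolding instanton_rhs_minus_def using fm_ode \<open>t0 \<le> t\<close> by blast
qed

theorem mainTheorem4:
  fixes r fp fm :: "real \<Rightarrow> real" and t0 :: real
  assumes r_gt1: "\<forall>t>0. r t > 1"
    and A_ode: "\<forall>t>0. ((\<lambda>s. BS_A (r s)) has_real_derivative
                  (1/2) * (1 - (BS_A (r t))\<^sup>2 / (BS_B (r t))\<^sup>2)) (at t)"
    and B_ode: "\<forall>t>0. ((\<lambda>s. BS_B (r s)) has_real_derivative
                  BS_A (r t) / BS_B (r t)) (at t)"
    and r_init: "(r \<longlongrightarrow> 1) (at_right 0)"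
    and t0_pos: "t0 > 0"
    and fp_ode: "\<forall>t\<ge>t0. (fp has_real_derivative
          fp t / BS_A (r t) * (1 - (BS_A (r t))\<^sup>2 / (BS_B (r t))\<^sup>2 - fp t)
          + (fm t)\<^sup>2 * BS_A (r t) / (BS_B (r t))\<^sup>2) (at t within {t0..})"
    and fm_ode: "\<forall>t\<ge>t0. (fm has_real_derivative
          2 * fm t / BS_A (r t) * (fp t - 1)) (at t within {t0..})"
    and init: "fp t0 > 1" "fm t0 > 1"
  shows "\<not> (\<exists>M. \<forall>t\<ge>t0. \<bar>fp t\<bar> \<le> M \<and> \<bar>fm t\<bar> \<le> M)"
proof
  assume "\<exists>M. \<forall>t\<ge>t0. \<bar>fp t\<bar> \<le> M \<and> \<bar>fm t\<bar> \<le> M"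
  then obtain M where "\<forall>t\<ge>t0. \<bar>fp t\<bar> \<le> M \<and> \<bar>fm t\<bar> \<le> M" ..
  then have bounded: "\<And>t. t0 \<le> t \<Longrightarrow> fp t \<le> M \<and> fm t \<le> M" by (auto dest: abs_le_D1)
  have r: "1 < r t" if "t0 \<le> t" for t using r_gt1 t0_pos that by simp
  have r_deriv: "(r has_real_derivative BS_speed (r t)) (at t)" if "t0 \<le> t" for t
    using B_ode t0_pos that r[OF that] by (intro BS_radius_deriv) auto
  interpret instanton_solution "\<lambda>t. BS_A (r t)" "\<lambda>t. BS_B (r t)" fp fm t0
    using r fp_ode fm_ode by (rule BS_instanton_solution)
  have "\<exists>C. \<forall>t\<ge>t0. ln (r t) \<le> C"
  proof (rule potential_bdd_above_if_bounded[OF init _ _ bounded])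
    fix t assume "t0 \<le> t"
    show "BS_A (r t) \<le> BS_B (r t)" using r[OF \<open>t0 \<le> t\<close>] by (rule BS_A_le_BS_B)
    show "((\<lambda>t. ln (r t)) has_real_derivative BS_A (r t) / (BS_B (r t))\<^sup>2) (at t within {t0..})"
      using r_deriv[OF \<open>t0 \<le> t\<close>] r[OF \<open>t0 \<le> t\<close>] by (intro BS_ln_radius_deriv) auto
  qed
  then show False using BS_ln_radius_unbounded[OF r r_deriv] by blast
qed

end
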